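(* For every integer $n\ge 1$: $\overline{\mathrm{spt}}(n)$ is odd if and only if $n$ is a square or twice a square; $\overline{\mathrm{spt}}_1(n)$ is odd if and only if $n$ is an odd square; $\overline{\mathrm{spt}}_2(n)$ is odd if and only if $n$ is an even square or twice a square.
   Context: An overpartition of $n$ is a partition of $n$ in which the first occurrence of each part size may (optionally) be overlined. $\overline{\mathrm{spt}}(n)$ is the total number of smallest parts, summed over all overpartitions of $n$ whose smallest part is not overlined (overpartitions whose smallest part is overlined contribute nothing). $\overline{\mathrm{spt}}_1(n)$ is the same count restricted to those overpartitions whose smallest part is odd, and $\overline{\mathrm{spt}}_2(n)$ is the same count restricted to those whose smallest part is even. For example $\overline{\mathrm{spt}}(4)=13$, $\overline{\mathrm{spt}}_1(4)=10$, $\overline{\mathrm{spt}}_2(4)=3$. *)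

theory Defs
  imports Main "HOL-Library.Multiset"
begin

text \<open>An overpartition of n is represented as a pair (P, Ov): P is the multiset of
  (positive) parts summing to n, and Ov is the set of part sizes whose first
  occurrence is overlined (so Ov must be a subset of the part sizes occurring in P).\<close>

definition overpartitions :: "nat \<Rightarrow> (nat multiset \<times> nat set) set" where
  "overpartitions n = {(P, Ov). (\<forall>x\<in>#P. 0 < x) \<and> sum_mset P = n \<and> Ov \<subseteq> set_mset P}"

definition smallest_part :: "nat multiset \<Rightarrow> nat" where
  "smallest_part P = Min (set_mset P)"

definition spt_bar_restr :: "(nat \<Rightarrow> bool) \<Rightarrow> nat \<Rightarrow> nat" where
  "spt_bar_restr Q n =
     (\<Sum>(P, Ov) \<in> {(P, Ov) \<in> overpartitions n. P \<noteq> {#} \<and> smallest_part P \<notin> Ov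
                                    \<and> Q (smallest_part P)}.
        count P (smallest_part P))"

definition spt_bar :: "nat \<Rightarrow> nat" where
  "spt_bar n = spt_bar_restr (\<lambda>_. True) n"

definition spt_bar1 :: "nat \<Rightarrow> nat" where
  "spt_bar1 n = spt_bar_restr odd n"

definition spt_bar2 :: "nat \<Rightarrow> nat" where
  "spt_bar2 n = spt_bar_restr even n"

end

theory Submission
  imports Defs "HOL-Library.Z2" "HOL-Library.Disjoint_Sets"
begin

text \<open>
  Toggling the overline on the largest part, whenever it differs from the smallest part, is an
  involution on the overpartitions counted by \<open>spt_bar_restr Q n\<close> which preserves the number of
  smallest parts. Modulo 2 only its fixed points count: the overpartitions \<open>s + \<dots> + s\<close> with
  \<open>s dvd n\<close> and \<open>Q s\<close>, each contributing \<open>n div s\<close>. So \<open>spt_bar_restr Q n\<close> has the parity of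
  the number of divisors \<open>s\<close> of \<open>n\<close> with \<open>Q s\<close> and \<open>n div s\<close> odd. Without restriction these
  correspond to the divisors of the odd part of \<open>n\<close>, whose number is odd iff the odd part is a
  square, i.e. iff \<open>n\<close> is a square or twice a square; requiring \<open>s\<close> odd (even) keeps all of them
  when \<open>n\<close> is odd (even) and none otherwise.
\<close>

lemma even_sum_involution_fixed_points:
  fixes g :: "'a \<Rightarrow> nat"
  assumes "finite A"
    and "\<And>x. x \<in> A \<Longrightarrow> h x \<in> A" "\<And>x. x \<in> A \<Longrightarrow> h (h x) = x"
    and "\<And>x. x \<in> A \<Longrightarrow> g (h x) = g x"
  shows "even (sum g A) \<longleftrightarrow> even (sum g {x \<in> A. h x = x})"
proof -
  let ?F = "{x \<in> A. h x = x}"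
  \<comment> \<open>In \<open>bit\<close> = \<open>\<int>/2\<close> the terms of \<open>x\<close> and \<open>h x\<close> cancel.\<close>
  have "(\<Sum>x\<in>A - ?F. of_nat (g x) :: bit) = 0"
  proof (rule sum_involution_eq_0)
    fix x assume x: "x \<in> A - ?F"
    then show "h x \<in> A - ?F" "h (h x) = x" "h x \<noteq> x" using assms(2,3) by auto
    show "of_nat (g (h x)) + of_nat (g x) = (0 :: bit)"
      using x assms(4) by (simp flip: mult_2)
  qed
  then have "even (sum g (A - ?F))"
    by (metis (mono_tags) of_nat_sum even_of_nat_iff even_zero)
  moreover have "sum g A = sum g (A - ?F) + sum g ?F"
    using assms(1) by (intro sum.subset_diff) auto
  ultimately show ?thesis by simp
qed

lemma odd_card_divisors_iff_square:
  fixes n :: nat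
  assumes "n > 0"
  shows "odd (card {d. d dvd n}) \<longleftrightarrow> (\<exists>k. n = k ^ 2)"
proof -
  have cofactor: "n div d dvd n" if "d dvd n" for d
    using that by (metis dvd_div_mult_self dvd_triv_left)
  have "even (card {d. d dvd n}) \<longleftrightarrow> even (card {d \<in> {d. d dvd n}. n div d = d})"
    using even_sum_involution_fixed_points[of "{d. d dvd n}" "\<lambda>d. n div d" "\<lambda>_. 1"] assms cofactor
    by (simp add: finite_divisors_nat div_div_eq_right)
  also have "{d \<in> {d. d dvd n}. n div d = d} = {d. d ^ 2 = n}"
    by (auto simp: power2_eq_square) (metis dvd_mult_div_cancel)+
  also have "even (card {d. d ^ 2 = n}) \<longleftrightarrow> \<not> (\<exists>k. n = k ^ 2)"
  proof (cases "\<exists>k. n = k ^ 2")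
    case True
    then obtain k where "n = k ^ 2" by blast
    then have "{d. d ^ 2 = n} = {k}" by auto
    then show ?thesis using True by simp
  qed (metis (mono_tags) empty_Collect_eq card.empty even_zero)
  finally show ?thesis by simp
qed

lemma odd_iff_odd_divisor_and_cofactor:
  fixes n :: nat
  assumes "d dvd n"
  shows "odd n \<longleftrightarrow> odd d \<and> odd (n div d)"
  by (metis assms dvd_mult_div_cancel even_mult_iff)

lemma odd_cofactor_divisors_double:
  fixes m :: nat
  shows "{d. d dvd 2 * m \<and> odd (2 * m div d)} = (*) 2 ` {d. d dvd m \<and> odd (m div d)}"
proof (intro equalityI subsetI)
  fix d assume d: "d \<in> {d. d dvd 2 * m \<and> odd (2 * m div d)}"
  then have "even d"
    using odd_iff_odd_divisor_and_cofactor[of d "2 * m"] by auto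
  then obtain t where "d = 2 * t" by blast
  with d show "d \<in> (*) 2 ` {d. d dvd m \<and> odd (m div d)}" by auto
qed auto

lemma double_is_square_or_twice_square_iff:
  fixes m :: nat
  shows "(\<exists>k. 2 * m = k ^ 2) \<or> (\<exists>k. 2 * m = 2 * k ^ 2) \<longleftrightarrow>
         (\<exists>k. m = k ^ 2) \<or> (\<exists>k. m = 2 * k ^ 2)"
proof -
  have "(\<exists>k. 2 * m = k ^ 2) \<longleftrightarrow> (\<exists>k. m = 2 * k ^ 2)"
  proof
    assume "\<exists>k. 2 * m = k ^ 2"
    then obtain k where k: "2 * m = k ^ 2" by blast
    then have "even k" by (metis dvd_triv_left even_power zero_less_numeral)
    with k show "\<exists>k. m = 2 * k ^ 2" by (auto simp: power2_eq_square elim!: evenE)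
  next
    assume "\<exists>k. m = 2 * k ^ 2"
    then show "\<exists>k. 2 * m = k ^ 2" by (metis power_mult_distrib power2_eq_square mult.assoc)
  qed
  then show ?thesis by auto
qed

lemma odd_card_odd_cofactor_divisors_iff:
  fixes n :: nat
  assumes "n > 0"
  shows "odd (card {d. d dvd n \<and> odd (n div d)}) \<longleftrightarrow> (\<exists>k. n = k ^ 2) \<or> (\<exists>k. n = 2 * k ^ 2)"
  using assms
proof (induction n rule: less_induct)
  case (less n)
  show ?case
  proof (cases "even n")
    case True
    then obtain m where n: "n = 2 * m" by blast
    have "card {d. d dvd n \<and> odd (n div d)} = card {d. d dvd m \<and> odd (m div d)}"
      unfolding n odd_cofactor_divisors_double by (rule card_image) (simp add: inj_on_def)
    then show ?thesis
      using less.IH[of m] less.prems double_is_square_or_twice_square_iff[of m] n by simp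
  next
    case False
    then have "{d. d dvd n \<and> odd (n div d)} = {d. d dvd n}"
      using odd_iff_odd_divisor_and_cofactor by blast
    then show ?thesis
      using False odd_card_divisors_iff_square[OF less.prems] by auto
  qed
qed

lemma positive_parts_bounded_by_sum:
  fixes P :: "nat multiset"
  assumes "\<forall>x\<in>#P. 0 < x"
  shows "size P \<le> sum_mset P" "\<forall>x\<in>#P. x \<le> sum_mset P"
  using assms by (induction P) auto

lemma finite_overpartitions: "finite (overpartitions n)"
proof (rule finite_subset)
  show "overpartitions n \<subseteq> (\<Union>k\<le>n. multisets_of_size {..n} k) \<times> Pow {..n}"
  proof (clarify)
    fix P Ov assume "(P, Ov) \<in> overpartitions n"
    then have "\<forall>x\<in>#P. 0 < x" "sum_mset P = n" "Ov \<subseteq> set_mset P"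
      by (auto simp: overpartitions_def)
    with positive_parts_bounded_by_sum[of P]
    show "P \<in> (\<Union>k\<le>n. multisets_of_size {..n} k) \<and> Ov \<in> Pow {..n}"
      unfolding multisets_of_size_def by auto
  qed
  show "finite ((\<Union>k\<le>n. multisets_of_size {..n} k) \<times> Pow {..n})"
    by auto
qed

definition spt_overpartitions :: "(nat \<Rightarrow> bool) \<Rightarrow> nat \<Rightarrow> (nat multiset \<times> nat set) set" where
  "spt_overpartitions Q n = {(P, Ov) \<in> overpartitions n. P \<noteq> {#} \<and> smallest_part P \<notin> Ov
                                                       \<and> Q (smallest_part P)}"

lemma spt_bar_restr_eq_sum:
  "spt_bar_restr Q n = (\<Sum>x\<in>spt_overpartitions Q n. count (fst x) (smallest_part (fst x)))"
  unfolding spt_bar_restr_def spt_overpartitions_def case_prod_beta' ..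

lemma finite_spt_overpartitions: "finite (spt_overpartitions Q n)"
  using finite_overpartitions by (rule finite_subset[rotated]) (auto simp: spt_overpartitions_def)

lemma smallest_part_replicate_mset: "m \<noteq> 0 \<Longrightarrow> smallest_part (replicate_mset m s) = s"
  by (simp add: smallest_part_def)

definition toggle_largest :: "nat multiset \<times> nat set \<Rightarrow> nat multiset \<times> nat set" where
  "toggle_largest = (\<lambda>(P, Ov). let l = Max (set_mset P) in
     (P, if l = smallest_part P then Ov else if l \<in> Ov then Ov - {l} else insert l Ov))"

lemma toggle_largest_toggle_largest [simp]: "toggle_largest (toggle_largest x) = x"
  by (auto simp: toggle_largest_def Let_def split: prod.splits)

lemma fst_toggle_largest [simp]: "fst (toggle_largest x) = fst x"
  by (simp add: toggle_largest_def Let_def split: prod.splits)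

lemma toggle_largest_eq_iff: "toggle_largest (P, Ov) = (P, Ov) \<longleftrightarrow> Max (set_mset P) = smallest_part P"
  by (auto simp: toggle_largest_def Let_def)

lemma toggle_largest_in_spt_overpartitions:
  assumes "x \<in> spt_overpartitions Q n"
  shows "toggle_largest x \<in> spt_overpartitions Q n"
proof -
  obtain P Ov where x: "x = (P, Ov)" by (cases x)
  with assms have "P \<noteq> {#}" by (simp add: spt_overpartitions_def)
  then have "Max (set_mset P) \<in># P" by simp
  then show ?thesis
    using assms unfolding x spt_overpartitions_def overpartitions_def toggle_largest_def Let_def
    by simp blast
qed

lemma fixed_spt_overpartitions:
  assumes "n > 0"
  shows "{x \<in> spt_overpartitions Q n. toggle_largest x = x}
       = (\<lambda>s. (replicate_mset (n div s) s, {} :: nat set)) ` {s. s dvd n \<and> Q s}"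
proof (intro equalityI subsetI)
  fix x assume x: "x \<in> {x \<in> spt_overpartitions Q n. toggle_largest x = x}"
  then obtain P Ov where x_eq: "x = (P, Ov)" by (cases x)
  define s where "s = smallest_part P"
  from x have P: "\<forall>x\<in>#P. 0 < x" "sum_mset P = n" "Ov \<subseteq> set_mset P" "P \<noteq> {#}"
    and "s \<notin> Ov" "Q s" "Max (set_mset P) = s"
    by (auto simp: x_eq s_def spt_overpartitions_def overpartitions_def toggle_largest_eq_iff)
  have "set_mset P \<subseteq> {s}"
  proof
    fix y assume "y \<in># P"
    then have "s \<le> y" "y \<le> Max (set_mset P)" by (simp_all add: s_def smallest_part_def)
    then show "y \<in> {s}" using \<open>Max (set_mset P) = s\<close> by simp
  qed
  define m where "m = size P"
  with \<open>set_mset P \<subseteq> {s}\<close> have P_eq: "P = replicate_mset m s"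
    using set_mset_subset_singletonD by metis
  have "Ov = {}"
    using P(3) \<open>set_mset P \<subseteq> {s}\<close> \<open>s \<notin> Ov\<close> by auto
  have "s \<in># P"
    using P(4) by (simp add: s_def smallest_part_def)
  with P(1) have "s > 0" by blast
  have "n = m * s"
    using P(2) P_eq by (metis sum_mset_replicate_mset of_nat_id)
  then have "s dvd n" "n div s = m"
    using \<open>s > 0\<close> by simp_all
  then show "x \<in> (\<lambda>s. (replicate_mset (n div s) s, {})) ` {s. s dvd n \<and> Q s}"
    using x_eq P_eq \<open>Ov = {}\<close> \<open>Q s\<close> by auto
next
  fix x assume "x \<in> (\<lambda>s. (replicate_mset (n div s) s, {} :: nat set)) ` {s. s dvd n \<and> Q s}"
  then obtain s where x: "x = (replicate_mset (n div s) s, {})" and s: "s dvd n" "Q s" by blast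
  have "n div s * s = n"
    using s(1) by simp
  then have "s > 0" "n div s > 0"
    using assms by (metis mult_0_right mult_0 neq0_conv)+
  then show "x \<in> {x \<in> spt_overpartitions Q n. toggle_largest x = x}"
    using x s \<open>n div s * s = n\<close>
    by (simp add: spt_overpartitions_def overpartitions_def toggle_largest_eq_iff smallest_part_def)
qed

lemma odd_spt_bar_restr_iff:
  assumes "n > 0"
  shows "odd (spt_bar_restr Q n) \<longleftrightarrow> odd (card {s. s dvd n \<and> Q s \<and> odd (n div s)})"
proof -
  let ?g = "\<lambda>x. count (fst x) (smallest_part (fst x))"
  let ?S = "{s. s dvd n \<and> Q s}"
  have cofactor_nonzero: "n div s \<noteq> 0" if "s dvd n" for s
    using that assms by (simp add: dvd_div_eq_0_iff)
  have "even (spt_bar_restr Q n) \<longleftrightarrow>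
        even (sum ?g {x \<in> spt_overpartitions Q n. toggle_largest x = x})"
    unfolding spt_bar_restr_eq_sum
    by (rule even_sum_involution_fixed_points)
       (simp_all add: finite_spt_overpartitions toggle_largest_in_spt_overpartitions)
  also have "sum ?g {x \<in> spt_overpartitions Q n. toggle_largest x = x} = (\<Sum>s\<in>?S. n div s)"
    unfolding fixed_spt_overpartitions[OF assms]
  proof (rule sum.reindex_cong)
    show "inj_on (\<lambda>s. (replicate_mset (n div s) s, {} :: nat set)) ?S"
      unfolding inj_on_def by (simp add: replicate_mset_eq_iff cofactor_nonzero)
  qed (simp_all add: cofactor_nonzero smallest_part_replicate_mset)
  also have "even (\<Sum>s\<in>?S. n div s) \<longleftrightarrow> even (card {s \<in> ?S. odd (n div s)})"
    using assms by (intro even_sum_iff) simp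
  finally show ?thesis by simp
qed

theorem theorem1p4:
  fixes n :: nat
  assumes "1 \<le> n"
  shows "(odd (spt_bar n) \<longleftrightarrow> (\<exists>k. n = k ^ 2) \<or> (\<exists>k. n = 2 * k ^ 2))
       \<and> (odd (spt_bar1 n) \<longleftrightarrow> odd n \<and> (\<exists>k. n = k ^ 2))
       \<and> (odd (spt_bar2 n) \<longleftrightarrow> (even n \<and> (\<exists>k. n = k ^ 2)) \<or> (\<exists>k. n = 2 * k ^ 2))"
proof -
  let ?D = "{s. s dvd n \<and> odd (n div s)}"
  have n: "n > 0" using assms by simp
  have odd_part: "{s. s dvd n \<and> odd s \<and> odd (n div s)} = (if odd n then ?D else {})"
    and even_part: "{s. s dvd n \<and> even s \<and> odd (n div s)} = (if odd n then {} else ?D)"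
    using odd_iff_odd_divisor_and_cofactor[of _ n] by auto
  have "odd n \<Longrightarrow> \<not> (\<exists>k. n = 2 * k ^ 2)" by auto
  then show ?thesis
    using odd_spt_bar_restr_iff[OF n, of "\<lambda>_. True"] odd_spt_bar_restr_iff[OF n, of odd]
      odd_spt_bar_restr_iff[OF n, of even] odd_card_odd_cofactor_divisors_iff[OF n]
    unfolding spt_bar_def spt_bar1_def spt_bar2_def odd_part even_part by auto
qed

end
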